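(* Let $n\ge1$. Every $n$-qubit unitary of the 11-stage form -H-C-P-C-P-C-H-P-C-P-C- (i.e. a composition, in this order of application, of an $\textsc{H}$-layer, $\textsc{C}$-layer, $\textsc{P}$-layer, $\textsc{C}$-layer, $\textsc{P}$-layer, $\textsc{C}$-layer, $\textsc{H}$-layer, $\textsc{P}$-layer, $\textsc{C}$-layer, $\textsc{P}$-layer, $\textsc{C}$-layer) can be written in the 8-stage form -H-C-CZ-P-H-P-CZ-C-, i.e. as a composition, in this order of application, of an $\textsc{H}$-layer, a $\textsc{C}$-layer, a $\textsc{CZ}$-layer, a $\textsc{P}$-layer, an $\textsc{H}$-layer, a $\textsc{P}$-layer, a $\textsc{CZ}$-layer and a $\textsc{C}$-layer.
   Context: Gates: $\textsc{H}=\frac{1}{\sqrt2}\begin{pmatrix}1&1\\1&-1\end{pmatrix}$, $\textsc{P}=\mathrm{diag}(1,i)$, $\textsc{CNOT}|a,b\rangle=|a,a\oplus b\rangle$, $\textsc{CZ}|a,b\rangle=(-1)^{ab}|a,b\rangle$. Layers on $n$ qubits: an $\textsc{H}$-layer is $\bigotimes_{j} \textsc{H}^{b_j}$, $b_j\in\{0,1\}$; a $\textsc{P}$-layer is $\bigotimes_{j} \textsc{P}^{a_j}$, $a_j\in\{0,1,2,3\}$; a $\textsc{C}$-layer is any unitary implemented by a circuit of $\textsc{CNOT}$ gates (equivalently $|x\rangle\mapsto|Ax\rangle$, $A$ invertible over $\mathbb F_2$); a $\textsc{CZ}$-layer is any product of $\textsc{CZ}$ gates on pairs of qubits. Stage notation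 -X-Y-...- lists stages in order of application (leftmost applied first). *)

theory Defs
  imports Complex_Main "Jordan_Normal_Form.Matrix"
begin

text \<open>The computational basis state
  with index x < 2^n has bit string (bit x 0, ..., bit x (n-1)); qubit j carries bit x j.
  A product of layers applied in the order L1, L2, ..., Lk is the matrix Lk * ... * L1.\<close>

definition qdim :: "nat \<Rightarrow> nat" where "qdim n = 2 ^ n"

definition had_entry :: "bool \<Rightarrow> bool \<Rightarrow> complex" where
  "had_entry x y = (if x \<and> y then - 1 else 1) / complex_of_real (sqrt 2)"

definition H_layer :: "nat \<Rightarrow> (nat \<Rightarrow> bool) \<Rightarrow> complex mat" where
  "H_layer n b = mat (qdim n) (qdim n) (\<lambda>(x, y).
      \<Prod>j<n. if b j then had_entry (bit x j) (bit y j)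
              else (if bit x j = bit y j then 1 else 0))"

definition P_layer :: "nat \<Rightarrow> (nat \<Rightarrow> nat) \<Rightarrow> complex mat" where
  "P_layer n a = mat (qdim n) (qdim n) (\<lambda>(x, y).
      if x = y then (\<Prod>j<n. if bit x j then \<i> ^ (a j) else 1) else 0)"

definition cnot_gate :: "nat \<Rightarrow> nat \<Rightarrow> nat \<Rightarrow> complex mat" where
  "cnot_gate n c t = mat (qdim n) (qdim n) (\<lambda>(y, x).
      if (\<forall>j<n. bit y j = (if j = t then (bit x t \<noteq> bit x c) else bit x j)) then 1 else 0)"

definition cz_gate :: "nat \<Rightarrow> nat \<Rightarrow> nat \<Rightarrow> complex mat" where
  "cz_gate n i k = mat (qdim n) (qdim n) (\<lambda>(x, y).
      if x = y then (if bit x i \<and> bit x k then - 1 else 1) else 0)"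

definition circuit :: "nat \<Rightarrow> complex mat list \<Rightarrow> complex mat" where
  "circuit n gs = foldl (\<lambda>acc g. g * acc) (1\<^sub>m (qdim n)) gs"

definition H_layers :: "nat \<Rightarrow> complex mat set" where
  "H_layers n = {H_layer n b | b. True}"

definition P_layers :: "nat \<Rightarrow> complex mat set" where
  "P_layers n = {P_layer n a | a. \<forall>j. a j < 4}"

definition C_layers :: "nat \<Rightarrow> complex mat set" where
  "C_layers n = {circuit n (map (\<lambda>(c, t). cnot_gate n c t) ps) | ps.
                   \<forall>(c, t) \<in> set ps. c < n \<and> t < n \<and> c \<noteq> t}"

definition CZ_layers :: "nat \<Rightarrow> complex mat set" where
  "CZ_layers n = {circuit n (map (\<lambda>(i, k). cz_gate n i k) ps) | ps.
                   \<forall>(i, k) \<in> set ps. i < n \<and> k < n \<and> i \<noteq> k}"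

end

theory Submission
  imports Defs
begin

text \<open>A C-layer is the permutation matrix of an invertible linear map of the bit vector, and a
  P-layer times a CZ-layer is the diagonal matrix of a phase \<open>\<i>^(linear form) \<cdot> (-1)^(quadratic form)\<close>
  of the bits. Precomposing such a phase with an invertible linear map gives a phase of the same
  kind, so these diagonals can be moved through C-layers. In each of the two -C-P-C-P- blocks next
  to the central H-layer, both C-layers can thus be moved away from that H-layer while the two
  P-layers merge into one such diagonal, which splits back into a P-layer and a CZ-layer in either
  order.\<close>

lemma bit_ge_length: "(x::nat) < 2 ^ n \<Longrightarrow> n \<le> j \<Longrightarrow> \<not> bit x j"
  by (metis bit_take_bit_iff linorder_not_le take_bit_nat_eq_self_iff)

lemma bit_imp_less_length: "(x::nat) < 2 ^ n \<Longrightarrow> bit x j \<Longrightarrow> j < n"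
  using bit_ge_length not_le by blast

lemma bit_eq_below_length:
  "(x::nat) < 2 ^ n \<Longrightarrow> y < 2 ^ n \<Longrightarrow> (\<forall>j<n. bit x j = bit y j) \<Longrightarrow> x = y"
  by (metis bit_eq_iff bit_ge_length linorder_not_le)

definition cnot_map :: "nat \<Rightarrow> nat \<Rightarrow> nat \<Rightarrow> nat" where
  "cnot_map c t x = (if bit x c then flip_bit t x else x)"

lemma bit_cnot_map:
  "c \<noteq> t \<Longrightarrow> bit (cnot_map c t x) j = (if j = t then bit x t \<noteq> bit x c else bit x j)"
  by (auto simp: cnot_map_def bit_flip_bit_iff)

lemma cnot_map_less: assumes "t < n" "x < 2 ^ n" shows "cnot_map c t x < 2 ^ n"
proof -
  have "flip_bit t x = take_bit n (flip_bit t x)"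
    by (rule bit_eqI)
      (use assms bit_ge_length in \<open>auto simp: bit_flip_bit_iff bit_take_bit_iff dest: bit_imp_less_length\<close>)
  then have "flip_bit t x < 2 ^ n" by (metis take_bit_nat_less_exp)
  then show ?thesis using assms by (simp add: cnot_map_def)
qed

lemma cnot_map_cnot_map: "c \<noteq> t \<Longrightarrow> cnot_map c t (cnot_map c t x) = x"
  by (rule bit_eqI) (auto simp: bit_cnot_map)

abbreviation qubit_pairs :: "nat \<Rightarrow> (nat \<times> nat) list \<Rightarrow> bool" where
  "qubit_pairs n ps \<equiv> \<forall>(c, t) \<in> set ps. c < n \<and> t < n \<and> c \<noteq> t"

definition cnot_perm :: "(nat \<times> nat) list \<Rightarrow> nat \<Rightarrow> nat" where
  "cnot_perm ps = fold (\<lambda>(c, t). cnot_map c t) ps"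

lemma cnot_perm_Nil: "cnot_perm [] = (\<lambda>x. x)"
  by (simp add: cnot_perm_def id_def)

lemma cnot_perm_append: "cnot_perm (ps @ qs) = cnot_perm qs \<circ> cnot_perm ps"
  by (simp add: cnot_perm_def)

lemma cnot_perm_less: "qubit_pairs n ps \<Longrightarrow> x < 2 ^ n \<Longrightarrow> cnot_perm ps x < 2 ^ n"
  by (induction ps arbitrary: x) (auto simp: cnot_perm_def cnot_map_less)

lemma cnot_perm_rev_cnot_perm: "qubit_pairs n ps \<Longrightarrow> cnot_perm (rev ps) (cnot_perm ps x) = x"
  by (induction ps arbitrary: x) (auto simp: cnot_perm_def cnot_map_cnot_map)

subsection \<open>Diagonal and permutation matrices\<close>

definition phase_mat :: "nat \<Rightarrow> (nat \<Rightarrow> complex) \<Rightarrow> complex mat" where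
  "phase_mat n f = mat (qdim n) (qdim n) (\<lambda>(x, y). if x = y then f x else 0)"

definition perm_mat :: "nat \<Rightarrow> (nat \<Rightarrow> nat) \<Rightarrow> complex mat" where
  "perm_mat n g = mat (qdim n) (qdim n) (\<lambda>(y, x). if y = g x then 1 else 0)"

lemma phase_mat_carrier [simp]: "phase_mat n f \<in> carrier_mat (qdim n) (qdim n)"
  by (simp add: phase_mat_def)

lemma perm_mat_carrier [simp]: "perm_mat n g \<in> carrier_mat (qdim n) (qdim n)"
  by (simp add: perm_mat_def)

lemma phase_mat_mult_left:
  assumes "B \<in> carrier_mat (qdim n) m"
  shows "phase_mat n f * B = mat (qdim n) m (\<lambda>(x, y). f x * B $$ (x, y))"
proof (rule eq_matI)
  fix i j assume "i < dim_row (mat (qdim n) m (\<lambda>(x, y). f x * B $$ (x, y)))"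
    "j < dim_col (mat (qdim n) m (\<lambda>(x, y). f x * B $$ (x, y)))"
  then have ij: "i < qdim n" "j < m" by auto
  have "(phase_mat n f * B) $$ (i, j) = (\<Sum>k\<in>{0..<qdim n}. (if i = k then f i else 0) * B $$ (k, j))"
    using ij assms by (simp add: phase_mat_def scalar_prod_def)
  also have "\<dots> = (\<Sum>k\<in>{0..<qdim n}. if i = k then f i * B $$ (i, j) else 0)"
    by (rule sum.cong) auto
  also have "\<dots> = f i * B $$ (i, j)"
    using ij by simp
  finally show "(phase_mat n f * B) $$ (i, j) = mat (qdim n) m (\<lambda>(x, y). f x * B $$ (x, y)) $$ (i, j)"
    using ij by simp
qed (use assms in \<open>auto simp: phase_mat_def\<close>)

lemma phase_mat_mult_right:
  assumes "A \<in> carrier_mat m (qdim n)"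
  shows "A * phase_mat n f = mat m (qdim n) (\<lambda>(x, y). A $$ (x, y) * f y)"
proof (rule eq_matI)
  fix i j assume "i < dim_row (mat m (qdim n) (\<lambda>(x, y). A $$ (x, y) * f y))"
    "j < dim_col (mat m (qdim n) (\<lambda>(x, y). A $$ (x, y) * f y))"
  then have ij: "i < m" "j < qdim n" by auto
  have "(A * phase_mat n f) $$ (i, j) = (\<Sum>k\<in>{0..<qdim n}. A $$ (i, k) * (if k = j then f k else 0))"
    using ij assms by (simp add: phase_mat_def scalar_prod_def)
  also have "\<dots> = (\<Sum>k\<in>{0..<qdim n}. if k = j then A $$ (i, j) * f j else 0)"
    by (rule sum.cong) auto
  also have "\<dots> = A $$ (i, j) * f j"
    using ij by simp
  finally show "(A * phase_mat n f) $$ (i, j) = mat m (qdim n) (\<lambda>(x, y). A $$ (x, y) * f y) $$ (i, j)"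
    using ij by simp
qed (use assms in \<open>auto simp: phase_mat_def\<close>)

lemma phase_mat_mult: "phase_mat n f * phase_mat n g = phase_mat n (\<lambda>x. f x * g x)"
  by (subst phase_mat_mult_left) (auto simp: phase_mat_def)

lemma phase_mat_cong: "(\<And>x. x < qdim n \<Longrightarrow> f x = g x) \<Longrightarrow> phase_mat n f = phase_mat n g"
  by (auto simp: phase_mat_def)

lemma one_mat_eq_phase_mat: "1\<^sub>m (qdim n) = phase_mat n (\<lambda>_. 1)"
  by (auto simp: phase_mat_def)

lemma one_mat_eq_perm_mat: "1\<^sub>m (qdim n) = perm_mat n (\<lambda>x. x)"
  by (auto simp: perm_mat_def)

lemma perm_mat_mult:
  assumes "\<And>x. x < qdim n \<Longrightarrow> h x < qdim n"
  shows "perm_mat n g * perm_mat n h = perm_mat n (g \<circ> h)"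
proof (rule eq_matI)
  fix y x assume "y < dim_row (perm_mat n (g \<circ> h))" "x < dim_col (perm_mat n (g \<circ> h))"
  then have yx: "y < qdim n" "x < qdim n" by (auto simp: perm_mat_def)
  have "(perm_mat n g * perm_mat n h) $$ (y, x)
      = (\<Sum>k\<in>{0..<qdim n}. (if y = g k then 1 else 0) * (if k = h x then 1 else 0))"
    using yx by (simp add: perm_mat_def scalar_prod_def)
  also have "\<dots> = (\<Sum>k\<in>{0..<qdim n}. if k = h x then (if y = g (h x) then 1 else 0) else 0)"
    by (rule sum.cong) auto
  also have "\<dots> = (if y = g (h x) then 1 else 0)"
    using yx assms by simp
  finally show "(perm_mat n g * perm_mat n h) $$ (y, x) = perm_mat n (g \<circ> h) $$ (y, x)"
    using yx by (simp add: perm_mat_def)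
qed (auto simp: perm_mat_def)

lemma phase_mat_mult_perm_mat:
  assumes "\<And>x. x < qdim n \<Longrightarrow> g x < qdim n"
  shows "phase_mat n f * perm_mat n g = perm_mat n g * phase_mat n (f \<circ> g)"
  unfolding phase_mat_mult_left[OF perm_mat_carrier] phase_mat_mult_right[OF perm_mat_carrier]
  using assms by (auto simp: perm_mat_def)

lemma perm_mat_mult_phase_mat:
  assumes "\<And>x. x < qdim n \<Longrightarrow> h (g x) = x"
  shows "perm_mat n g * phase_mat n f = phase_mat n (f \<circ> h) * perm_mat n g"
  unfolding phase_mat_mult_left[OF perm_mat_carrier] phase_mat_mult_right[OF perm_mat_carrier]
  using assms by (auto simp: perm_mat_def)

lemma circuit_Nil: "circuit n [] = 1\<^sub>m (qdim n)"
  by (simp add: circuit_def)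

lemma circuit_snoc: "circuit n (gs @ [g]) = g * circuit n gs"
  by (simp add: circuit_def)

lemma cnot_gate_eq_perm_mat:
  assumes "c \<noteq> t" "t < n"
  shows "cnot_gate n c t = perm_mat n (cnot_map c t)"
proof (rule eq_matI)
  fix y x assume "y < dim_row (perm_mat n (cnot_map c t))" "x < dim_col (perm_mat n (cnot_map c t))"
  then have yx: "y < 2 ^ n" "x < 2 ^ n" by (auto simp: perm_mat_def qdim_def)
  have "(\<forall>j<n. bit y j = (if j = t then bit x t \<noteq> bit x c else bit x j)) \<longleftrightarrow> y = cnot_map c t x"
  proof
    assume "\<forall>j<n. bit y j = (if j = t then bit x t \<noteq> bit x c else bit x j)"
    then show "y = cnot_map c t x"
      using assms by (intro bit_eq_below_length[OF yx(1) cnot_map_less[OF assms(2) yx(2)]])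
        (simp add: bit_cnot_map)
  qed (use assms in \<open>simp add: bit_cnot_map\<close>)
  then show "cnot_gate n c t $$ (y, x) = perm_mat n (cnot_map c t) $$ (y, x)"
    using yx by (simp add: cnot_gate_def perm_mat_def qdim_def)
qed (auto simp: cnot_gate_def perm_mat_def)

lemma cnot_circuit_eq_perm_mat:
  "qubit_pairs n ps \<Longrightarrow> circuit n (map (\<lambda>(c, t). cnot_gate n c t) ps) = perm_mat n (cnot_perm ps)"
proof (induction ps rule: rev_induct)
  case Nil
  then show ?case by (simp add: circuit_Nil one_mat_eq_perm_mat cnot_perm_Nil)
next
  case (snoc p ps)
  obtain c t where p: "p = (c, t)" and ct: "c < n" "t < n" "c \<noteq> t"
    using snoc.prems by (cases p) auto
  have "circuit n (map (\<lambda>(c, t). cnot_gate n c t) (ps @ [p])) = cnot_gate n c t * perm_mat n (cnot_perm ps)"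
    using snoc by (simp add: circuit_snoc p)
  also have "\<dots> = perm_mat n (cnot_map c t) * perm_mat n (cnot_perm ps)"
    using ct by (simp add: cnot_gate_eq_perm_mat)
  also have "\<dots> = perm_mat n (cnot_map c t \<circ> cnot_perm ps)"
    by (rule perm_mat_mult) (use snoc.prems in \<open>auto simp: cnot_perm_less qdim_def\<close>)
  also have "\<dots> = perm_mat n (cnot_perm (ps @ [p]))"
    by (simp add: cnot_perm_append p cnot_perm_def[of "[_]"])
  finally show ?case .
qed

lemma C_layersE:
  assumes "C \<in> C_layers n"
  obtains ps where "qubit_pairs n ps" "C = perm_mat n (cnot_perm ps)"
proof -
  obtain ps where ps: "qubit_pairs n ps" "C = circuit n (map (\<lambda>(c, t). cnot_gate n c t) ps)"
    using assms unfolding C_layers_def by blast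
  have "C = perm_mat n (cnot_perm ps)"
    using ps by (simp add: cnot_circuit_eq_perm_mat)
  with ps(1) show thesis by (rule that)
qed

lemma C_layers_mult:
  assumes "C \<in> C_layers n" "C' \<in> C_layers n"
  shows "C' * C \<in> C_layers n"
proof -
  obtain ps where ps: "qubit_pairs n ps" "C = perm_mat n (cnot_perm ps)"
    using assms(1) by (rule C_layersE)
  obtain qs where qs: "qubit_pairs n qs" "C' = perm_mat n (cnot_perm qs)"
    using assms(2) by (rule C_layersE)
  have pairs: "qubit_pairs n (ps @ qs)" using ps(1) qs(1) by auto
  have "C' * C = perm_mat n (cnot_perm qs \<circ> cnot_perm ps)"
    unfolding ps(2) qs(2) by (rule perm_mat_mult) (use ps(1) in \<open>auto simp: cnot_perm_less qdim_def\<close>)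
  also have "\<dots> = circuit n (map (\<lambda>(c, t). cnot_gate n c t) (ps @ qs))"
    unfolding cnot_circuit_eq_perm_mat[OF pairs] cnot_perm_append ..
  finally show ?thesis using pairs unfolding C_layers_def by blast
qed

definition P_phase :: "nat \<Rightarrow> (nat \<Rightarrow> nat) \<Rightarrow> nat \<Rightarrow> complex" where
  "P_phase n a x = (\<Prod>j<n. if bit x j then \<i> ^ a j else 1)"

definition cz_sign :: "nat \<Rightarrow> nat \<Rightarrow> nat \<Rightarrow> complex" where
  "cz_sign i k x = (if bit x i \<and> bit x k then - 1 else 1)"

definition CZ_phase :: "(nat \<times> nat) list \<Rightarrow> nat \<Rightarrow> complex" where
  "CZ_phase ps x = prod_list (map (\<lambda>(i, k). cz_sign i k x) ps)"

lemma P_layer_eq_phase_mat: "P_layer n a = phase_mat n (P_phase n a)"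
  unfolding P_layer_def phase_mat_def P_phase_def ..

lemma cz_circuit_eq_phase_mat: "circuit n (map (\<lambda>(i, k). cz_gate n i k) ps) = phase_mat n (CZ_phase ps)"
proof (induction ps rule: rev_induct)
  case Nil
  then show ?case by (simp add: circuit_Nil one_mat_eq_phase_mat CZ_phase_def)
next
  case (snoc p ps)
  have "cz_gate n (fst p) (snd p) = phase_mat n (cz_sign (fst p) (snd p))"
    unfolding cz_gate_def phase_mat_def cz_sign_def ..
  with snoc show ?case
    by (simp add: circuit_snoc case_prod_beta phase_mat_mult CZ_phase_def mult.commute)
qed

lemma H_layers_carrier: "H \<in> H_layers n \<Longrightarrow> H \<in> carrier_mat (qdim n) (qdim n)"
  by (auto simp: H_layers_def H_layer_def)

lemma C_layers_carrier: "C \<in> C_layers n \<Longrightarrow> C \<in> carrier_mat (qdim n) (qdim n)"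
  by (erule C_layersE) simp

lemma P_layers_carrier: "P \<in> P_layers n \<Longrightarrow> P \<in> carrier_mat (qdim n) (qdim n)"
  by (auto simp: P_layers_def P_layer_eq_phase_mat)

lemma CZ_layers_carrier: "Z \<in> CZ_layers n \<Longrightarrow> Z \<in> carrier_mat (qdim n) (qdim n)"
  by (auto simp: CZ_layers_def cz_circuit_eq_phase_mat)

subsection \<open>Phases of P-layers times CZ-layers\<close>

definition clifford_phase :: "nat \<Rightarrow> (nat \<Rightarrow> complex) \<Rightarrow> bool" where
  "clifford_phase n f \<longleftrightarrow> (\<exists>a ps. (\<forall>j. a j < 4) \<and> qubit_pairs n ps \<and>
      (\<forall>x<qdim n. f x = P_phase n a x * CZ_phase ps x))"

lemma clifford_phaseI:
  assumes "\<forall>j. a j < 4" "qubit_pairs n ps" "\<And>x. x < qdim n \<Longrightarrow> f x = P_phase n a x * CZ_phase ps x"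
  shows "clifford_phase n f"
  using assms unfolding clifford_phase_def by blast

lemma clifford_phaseE:
  assumes "clifford_phase n f"
  obtains a ps where "\<forall>j. a j < 4" "qubit_pairs n ps"
    "\<forall>x<qdim n. f x = P_phase n a x * CZ_phase ps x"
  using assms unfolding clifford_phase_def by blast

lemma clifford_phase_cong:
  assumes "clifford_phase n f" "\<And>x. x < qdim n \<Longrightarrow> f x = g x"
  shows "clifford_phase n g"
proof -
  obtain a ps where "\<forall>j. a j < 4" "qubit_pairs n ps"
    "\<forall>x<qdim n. f x = P_phase n a x * CZ_phase ps x"
    using assms(1) by (rule clifford_phaseE)
  then show ?thesis using assms(2) by (intro clifford_phaseI[where a=a and ps=ps]) auto
qed

lemma P_phase_zero: "P_phase n (\<lambda>_. 0) x = 1"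
  unfolding P_phase_def by (rule prod.neutral) auto

lemma i_power_mod_4: "\<i> ^ m = \<i> ^ (m mod 4)"
proof -
  have "m = 4 * (m div 4) + m mod 4" by simp
  then have "\<i> ^ m = (\<i> ^ 4) ^ (m div 4) * \<i> ^ (m mod 4)"
    by (metis power_add power_mult)
  also have "(\<i> :: complex) ^ 4 = 1" by (simp add: numeral_eq_Suc)
  finally show ?thesis by simp
qed

lemma P_phase_mult: "P_phase n a x * P_phase n b x = P_phase n (\<lambda>j. (a j + b j) mod 4) x"
  unfolding P_phase_def prod.distrib[symmetric]
  by (rule prod.cong) (auto simp: power_add[symmetric] i_power_mod_4[of "a _ + b _"])

lemma CZ_phase_append: "CZ_phase (ps @ qs) x = CZ_phase ps x * CZ_phase qs x"
  by (simp add: CZ_phase_def)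

lemma clifford_phase_one: "clifford_phase n (\<lambda>_. 1)"
  by (rule clifford_phaseI[where a="\<lambda>_. 0" and ps="[]"]) (simp_all add: P_phase_zero CZ_phase_def)

lemma clifford_phase_mult:
  assumes "clifford_phase n f" "clifford_phase n g"
  shows "clifford_phase n (\<lambda>x. f x * g x)"
proof -
  obtain a ps where a: "\<forall>j. a j < 4" "qubit_pairs n ps"
    "\<forall>x<qdim n. f x = P_phase n a x * CZ_phase ps x"
    using assms(1) by (rule clifford_phaseE)
  obtain b qs where b: "\<forall>j. b j < 4" "qubit_pairs n qs"
    "\<forall>x<qdim n. g x = P_phase n b x * CZ_phase qs x"
    using assms(2) by (rule clifford_phaseE)
  show ?thesis
  proof (rule clifford_phaseI[where a="\<lambda>j. (a j + b j) mod 4" and ps="ps @ qs"])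
    fix x assume "x < qdim n"
    then show "f x * g x = P_phase n (\<lambda>j. (a j + b j) mod 4) x * CZ_phase (ps @ qs) x"
      using a(3) b(3) by (simp add: P_phase_mult[symmetric] CZ_phase_append mult_ac)
  qed (use a(2) b(2) in auto)
qed

lemma clifford_phase_power: "clifford_phase n f \<Longrightarrow> clifford_phase n (\<lambda>x. f x ^ m)"
  by (induction m) (simp_all add: clifford_phase_one clifford_phase_mult)

lemma clifford_phase_prod:
  "finite S \<Longrightarrow> (\<And>j. j \<in> S \<Longrightarrow> clifford_phase n (F j)) \<Longrightarrow> clifford_phase n (\<lambda>x. \<Prod>j\<in>S. F j x)"
  by (induction S rule: finite_induct) (simp_all add: clifford_phase_one clifford_phase_mult)

lemma clifford_phase_prod_list:
  "(\<And>p. p \<in> set ps \<Longrightarrow> clifford_phase n (F p)) \<Longrightarrow> clifford_phase n (\<lambda>x. \<Prod>p\<leftarrow>ps. F p x)"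
  by (induction ps) (simp_all add: clifford_phase_one clifford_phase_mult)

lemma clifford_phase_i_bit:
  assumes "j < n"
  shows "clifford_phase n (\<lambda>x. if bit x j then \<i> else 1)"
proof (rule clifford_phaseI[where a="\<lambda>l. if l = j then 1 else 0" and ps="[]"])
  fix x
  have "P_phase n (\<lambda>l. if l = j then 1 else 0) x = (\<Prod>l<n. if l = j then (if bit x j then \<i> else 1) else 1)"
    unfolding P_phase_def by (rule prod.cong) auto
  then show "(if bit x j then \<i> else 1) = P_phase n (\<lambda>l. if l = j then 1 else 0) x * CZ_phase [] x"
    using assms by (simp add: CZ_phase_def)
qed auto

lemma clifford_phase_sign_bit:
  assumes "j < n"
  shows "clifford_phase n (\<lambda>x. if bit x j then - 1 else 1)"
  by (rule clifford_phase_cong[OF clifford_phase_mult[OF clifford_phase_i_bit[OF assms] clifford_phase_i_bit[OF assms]]])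
    auto

lemma clifford_phase_cz_sign:
  assumes "i < n" "k < n" "i \<noteq> k"
  shows "clifford_phase n (cz_sign i k)"
  by (rule clifford_phaseI[where a="\<lambda>_. 0" and ps="[(i, k)]"]) (use assms in \<open>simp_all add: CZ_phase_def P_phase_zero\<close>)

lemma P_layersE:
  assumes "P \<in> P_layers n"
  obtains f where "clifford_phase n f" "P = phase_mat n f"
proof -
  obtain a where a: "\<forall>j. a j < 4" "P = P_layer n a"
    using assms unfolding P_layers_def by blast
  have "clifford_phase n (P_phase n a)"
    by (rule clifford_phaseI[where a=a and ps="[]"]) (simp_all add: a(1) CZ_phase_def)
  with a(2) show thesis by (intro that) (simp_all add: P_layer_eq_phase_mat)
qed

lemma clifford_phase_mat_eq_P_CZ:
  assumes "clifford_phase n f"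
  obtains P Z where "P \<in> P_layers n" "Z \<in> CZ_layers n" "phase_mat n f = P * Z" "phase_mat n f = Z * P"
proof -
  obtain a ps where a: "\<forall>j. a j < 4" "qubit_pairs n ps"
    "\<forall>x<qdim n. f x = P_phase n a x * CZ_phase ps x"
    using assms by (rule clifford_phaseE)
  let ?P = "P_layer n a" and ?Z = "circuit n (map (\<lambda>(i, k). cz_gate n i k) ps)"
  have P: "?P \<in> P_layers n" using a(1) unfolding P_layers_def by blast
  have Z: "?Z \<in> CZ_layers n" using a(2) unfolding CZ_layers_def by blast
  have PZ: "phase_mat n f = ?P * ?Z"
    unfolding P_layer_eq_phase_mat cz_circuit_eq_phase_mat phase_mat_mult
    using a(3) by (intro phase_mat_cong) auto
  also have "\<dots> = ?Z * ?P"
    unfolding P_layer_eq_phase_mat cz_circuit_eq_phase_mat phase_mat_mult by (simp add: mult.commute)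
  finally show thesis using that P Z PZ by blast
qed

subsection \<open>Moving phases through C-layers\<close>

lemma P_phase_eq_prod_power: "P_phase n a x = (\<Prod>j<n. (if bit x j then \<i> else 1) ^ a j)"
  unfolding P_phase_def by (rule prod.cong) auto

lemma clifford_phase_i_bit_cnot_map:
  assumes "c < n" "t < n" "c \<noteq> t" "j < n"
  shows "clifford_phase n (\<lambda>x. if bit (cnot_map c t x) j then \<i> else 1)"
proof (cases "j = t")
  case True
  \<comment> \<open>\<open>\<i>^(a \<oplus> b) = \<i>^a \<cdot> \<i>^b \<cdot> (-1)^(a b)\<close> for bits \<open>a, b\<close>\<close>
  have "clifford_phase n (\<lambda>x. (if bit x t then \<i> else 1) * (if bit x c then \<i> else 1) * cz_sign t c x)"
    using assms by (intro clifford_phase_mult clifford_phase_i_bit clifford_phase_cz_sign) auto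
  then show ?thesis
    by (rule clifford_phase_cong) (use assms True in \<open>auto simp: bit_cnot_map cz_sign_def\<close>)
next
  case False
  then show ?thesis
    by (intro clifford_phase_cong[OF clifford_phase_i_bit[OF assms(4)]]) (simp add: bit_cnot_map assms)
qed

lemma clifford_phase_cz_sign_target_cnot_map:
  assumes "c < n" "t < n" "c \<noteq> t" "k < n" "k \<noteq> t"
  shows "clifford_phase n (\<lambda>x. cz_sign t k (cnot_map c t x))"
proof (cases "k = c")
  case True
  have "clifford_phase n (\<lambda>x. (if bit x c then - 1 else 1) * cz_sign t c x)"
    using assms by (intro clifford_phase_mult clifford_phase_sign_bit clifford_phase_cz_sign) auto
  then show ?thesis
    by (rule clifford_phase_cong) (use assms True in \<open>auto simp: bit_cnot_map cz_sign_def\<close>)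
next
  case False
  have "clifford_phase n (\<lambda>x. cz_sign t k x * cz_sign c k x)"
    using assms False by (intro clifford_phase_mult clifford_phase_cz_sign) auto
  then show ?thesis
    by (rule clifford_phase_cong) (use assms False in \<open>auto simp: bit_cnot_map cz_sign_def\<close>)
qed

lemma clifford_phase_cz_sign_cnot_map:
  assumes "c < n" "t < n" "c \<noteq> t" "i < n" "k < n" "i \<noteq> k"
  shows "clifford_phase n (\<lambda>x. cz_sign i k (cnot_map c t x))"
proof -
  consider "i = t" | "k = t" | "i \<noteq> t" "k \<noteq> t" by blast
  then show ?thesis
  proof cases
    case 1
    then show ?thesis using assms by (simp add: clifford_phase_cz_sign_target_cnot_map)
  next
    case 2
    then have "cz_sign i k = cz_sign t i" by (auto simp: cz_sign_def fun_eq_iff)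
    then show ?thesis using assms 2 by (simp add: clifford_phase_cz_sign_target_cnot_map)
  next
    case 3
    show ?thesis
      by (rule clifford_phase_cong[OF clifford_phase_cz_sign[OF assms(4-6)]])
        (use assms 3 in \<open>auto simp: bit_cnot_map cz_sign_def\<close>)
  qed
qed

lemma clifford_phase_comp_cnot_map:
  assumes "c < n" "t < n" "c \<noteq> t" "clifford_phase n f"
  shows "clifford_phase n (f \<circ> cnot_map c t)"
proof -
  obtain a ps where a: "\<forall>j. a j < 4" "qubit_pairs n ps"
    "\<forall>x<qdim n. f x = P_phase n a x * CZ_phase ps x"
    using assms(4) by (rule clifford_phaseE)
  have "clifford_phase n (\<lambda>x. (\<Prod>j<n. (if bit (cnot_map c t x) j then \<i> else 1) ^ a j) *
      (\<Prod>p\<leftarrow>ps. cz_sign (fst p) (snd p) (cnot_map c t x)))"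
    using assms(1-3) a(2)
    by (intro clifford_phase_mult clifford_phase_prod clifford_phase_prod_list clifford_phase_power
        clifford_phase_i_bit_cnot_map clifford_phase_cz_sign_cnot_map) auto
  then show ?thesis
  proof (rule clifford_phase_cong)
    fix x assume "x < qdim n"
    then have "cnot_map c t x < qdim n" using cnot_map_less[OF assms(2)] by (simp add: qdim_def)
    then show "(\<Prod>j<n. (if bit (cnot_map c t x) j then \<i> else 1) ^ a j) *
        (\<Prod>p\<leftarrow>ps. cz_sign (fst p) (snd p) (cnot_map c t x)) = (f \<circ> cnot_map c t) x"
      using a(3) by (simp add: P_phase_eq_prod_power CZ_phase_def split_def)
  qed
qed

lemma clifford_phase_comp_cnot_perm:
  "qubit_pairs n ps \<Longrightarrow> clifford_phase n f \<Longrightarrow> clifford_phase n (f \<circ> cnot_perm ps)"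
proof (induction ps arbitrary: f)
  case Nil
  then show ?case by (simp add: cnot_perm_Nil comp_def)
next
  case (Cons p ps)
  obtain c t where p: "p = (c, t)" by (cases p)
  have "clifford_phase n (f \<circ> cnot_perm ps)" using Cons.prems by (intro Cons.IH) auto
  then have "clifford_phase n (f \<circ> cnot_perm ps \<circ> cnot_map c t)"
    using Cons.prems p by (intro clifford_phase_comp_cnot_map) auto
  then show ?case by (simp add: cnot_perm_def p comp_def)
qed

lemma C_layer_mult_phase_mat:
  assumes "C \<in> C_layers n" "clifford_phase n f"
  obtains g where "clifford_phase n g" "C * phase_mat n f = phase_mat n g * C"
proof -
  obtain ps where ps: "qubit_pairs n ps" "C = perm_mat n (cnot_perm ps)"
    using assms(1) by (rule C_layersE)
  have "C * phase_mat n f = phase_mat n (f \<circ> cnot_perm (rev ps)) * C"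
    unfolding ps(2) by (rule perm_mat_mult_phase_mat) (use ps(1) cnot_perm_rev_cnot_perm in blast)
  moreover have "clifford_phase n (f \<circ> cnot_perm (rev ps))"
    using ps(1) assms(2) by (intro clifford_phase_comp_cnot_perm) auto
  ultimately show thesis using that by blast
qed

lemma phase_mat_mult_C_layer:
  assumes "C \<in> C_layers n" "clifford_phase n f"
  obtains g where "clifford_phase n g" "phase_mat n f * C = C * phase_mat n g"
proof -
  obtain ps where ps: "qubit_pairs n ps" "C = perm_mat n (cnot_perm ps)"
    using assms(1) by (rule C_layersE)
  have "phase_mat n f * C = C * phase_mat n (f \<circ> cnot_perm ps)"
    unfolding ps(2) by (rule phase_mat_mult_perm_mat) (use ps(1) cnot_perm_less in \<open>auto simp: qdim_def\<close>)
  moreover have "clifford_phase n (f \<circ> cnot_perm ps)"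
    using ps(1) assms(2) by (rule clifford_phase_comp_cnot_perm)
  ultimately show thesis using that by blast
qed

subsection \<open>Collapsing -C-P-C-P-\<close>

text \<open>Square instances of \<open>mult_carrier_mat\<close> and \<open>assoc_mult_mat\<close>: in the general rules the
  inner dimensions do not occur in the conclusion, so the simplifier cannot discharge their premises.\<close>

lemma mult_carrier_mat_square:
  "A \<in> carrier_mat k k \<Longrightarrow> B \<in> carrier_mat k k \<Longrightarrow> A * B \<in> carrier_mat k k"
  by (rule mult_carrier_mat)

lemma assoc_mult_mat_square:
  "A \<in> carrier_mat k k \<Longrightarrow> B \<in> carrier_mat k k \<Longrightarrow> C \<in> carrier_mat k k \<Longrightarrow> A * B * C = A * (B * C)"
  by (rule assoc_mult_mat)

lemmas square_mat_simps = mult_carrier_mat_square assoc_mult_mat_square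

lemma C_P_C_P_eq_C_CZ_P:
  assumes "C \<in> C_layers n" "C' \<in> C_layers n" "P \<in> P_layers n" "P' \<in> P_layers n"
  obtains Z P'' where "Z \<in> CZ_layers n" "P'' \<in> P_layers n" "C' * P' * C * P = C' * C * Z * P''"
proof -
  obtain f where f: "clifford_phase n f" "P = phase_mat n f"
    using assms(3) by (rule P_layersE)
  obtain f' where f': "clifford_phase n f'" "P' = phase_mat n f'"
    using assms(4) by (rule P_layersE)
  obtain g where g: "clifford_phase n g" "P' * C = C * phase_mat n g"
    using assms(1) f'(1) unfolding f'(2) by (rule phase_mat_mult_C_layer)
  obtain Z P'' where ZP: "Z \<in> CZ_layers n" "P'' \<in> P_layers n" "phase_mat n (\<lambda>x. g x * f x) = Z * P''"
    using clifford_phase_mult[OF g(1) f(1)] by (rule clifford_phase_mat_eq_P_CZ)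
  note carriers = C_layers_carrier[OF assms(1)] C_layers_carrier[OF assms(2)]
    P_layers_carrier[OF assms(4)] CZ_layers_carrier[OF ZP(1)] P_layers_carrier[OF ZP(2)]
  have "C' * P' * C * P = C' * (P' * C) * P"
    using carriers by (simp add: square_mat_simps)
  also have "\<dots> = C' * C * (phase_mat n g * phase_mat n f)"
    unfolding g(2) f(2) using carriers by (simp add: square_mat_simps)
  also have "\<dots> = C' * C * Z * P''"
    unfolding phase_mat_mult ZP(3) using carriers by (simp add: square_mat_simps)
  finally show thesis using that ZP(1,2) by blast
qed

lemma C_P_C_P_eq_P_CZ_C:
  assumes "C \<in> C_layers n" "C' \<in> C_layers n" "P \<in> P_layers n" "P' \<in> P_layers n"
    and "X \<in> carrier_mat (qdim n) (qdim n)"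
  obtains P'' Z where "P'' \<in> P_layers n" "Z \<in> CZ_layers n"
    "X * C' * P' * C * P = X * P'' * Z * (C' * C)"
proof -
  obtain f where f: "clifford_phase n f" "P = phase_mat n f"
    using assms(3) by (rule P_layersE)
  obtain f' where f': "clifford_phase n f'" "P' = phase_mat n f'"
    using assms(4) by (rule P_layersE)
  obtain g where g: "clifford_phase n g" "C * P = phase_mat n g * C"
    using assms(1) f(1) unfolding f(2) by (rule C_layer_mult_phase_mat)
  obtain h where h: "clifford_phase n h" "C' * phase_mat n (\<lambda>x. f' x * g x) = phase_mat n h * C'"
    using assms(2) clifford_phase_mult[OF f'(1) g(1)] by (rule C_layer_mult_phase_mat)
  obtain P'' Z where PZ: "P'' \<in> P_layers n" "Z \<in> CZ_layers n" "phase_mat n h = P'' * Z"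
    using h(1) by (rule clifford_phase_mat_eq_P_CZ)
  note carriers = assms(5) C_layers_carrier[OF assms(1)] C_layers_carrier[OF assms(2)]
    P_layers_carrier[OF assms(3)] P_layers_carrier[OF assms(4)]
    P_layers_carrier[OF PZ(1)] CZ_layers_carrier[OF PZ(2)]
  have "X * C' * P' * C * P = X * C' * P' * (phase_mat n g * C)"
    unfolding g(2)[symmetric] using carriers by (simp add: square_mat_simps)
  also have "\<dots> = X * (C' * (P' * phase_mat n g)) * C"
    using carriers by (simp add: square_mat_simps)
  also have "\<dots> = X * (phase_mat n h * C') * C"
    unfolding f'(2) phase_mat_mult h(2) ..
  also have "\<dots> = X * P'' * Z * (C' * C)"
    unfolding PZ(3) using carriers by (simp add: square_mat_simps)
  finally show thesis using that PZ(1,2) by blast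
qed

theorem mainTheorem3:
  fixes n :: nat
  assumes "n \<ge> 1"
    and "H1 \<in> H_layers n" and "C1 \<in> C_layers n" and "P1 \<in> P_layers n"
    and "C2 \<in> C_layers n" and "P2 \<in> P_layers n" and "C3 \<in> C_layers n"
    and "H2 \<in> H_layers n" and "P3 \<in> P_layers n" and "C4 \<in> C_layers n"
    and "P4 \<in> P_layers n" and "C5 \<in> C_layers n"
  shows "\<exists>H1' C1' Z1' P1' H2' P2' Z2' C2'.
           H1' \<in> H_layers n \<and> C1' \<in> C_layers n \<and> Z1' \<in> CZ_layers n \<and>
           P1' \<in> P_layers n \<and> H2' \<in> H_layers n \<and> P2' \<in> P_layers n \<and>
           Z2' \<in> CZ_layers n \<and> C2' \<in> C_layers n \<and>
           C5 * P4 * C4 * P3 * H2 * C3 * P2 * C2 * P1 * C1 * H1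
             = C2' * Z2' * P2' * H2' * P1' * Z1' * C1' * H1'"
proof -
  obtain Z2' P2' where ZP2: "Z2' \<in> CZ_layers n" "P2' \<in> P_layers n"
    "C5 * P4 * C4 * P3 = C5 * C4 * Z2' * P2'"
    using assms(10,12,9,11) by (rule C_P_C_P_eq_C_CZ_P)
  note carriers = C_layers_carrier[OF assms(3)]
    H_layers_carrier[OF assms(8)] C_layers_carrier[OF assms(5)] C_layers_carrier[OF assms(7)]
    C_layers_carrier[OF assms(10)] C_layers_carrier[OF assms(12)]
    CZ_layers_carrier[OF ZP2(1)] P_layers_carrier[OF ZP2(2)]
  have prefix: "C5 * C4 * Z2' * P2' * H2 \<in> carrier_mat (qdim n) (qdim n)"
    by (intro mult_carrier_mat_square carriers)
  obtain P1' Z1' where PZ1: "P1' \<in> P_layers n" "Z1' \<in> CZ_layers n"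
    "C5 * C4 * Z2' * P2' * H2 * C3 * P2 * C2 * P1 = C5 * C4 * Z2' * P2' * H2 * P1' * Z1' * (C3 * C2)"
    using assms(5,7,4,6) prefix by (rule C_P_C_P_eq_P_CZ_C)
  have merge_C: "C5 * C4 * Z2' * P2' * H2 * P1' * Z1' * (C3 * C2) * C1
      = C5 * C4 * Z2' * P2' * H2 * P1' * Z1' * (C3 * C2 * C1)"
    by (intro assoc_mult_mat_square[where k = "qdim n"] mult_carrier_mat_square carriers
        P_layers_carrier[OF PZ1(1)] CZ_layers_carrier[OF PZ1(2)])
  have "C5 * P4 * C4 * P3 * H2 * C3 * P2 * C2 * P1 * C1 * H1
      = (C5 * C4) * Z2' * P2' * H2 * P1' * Z1' * (C3 * C2 * C1) * H1"
    unfolding ZP2(3) PZ1(3) merge_C ..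
  moreover have "C5 * C4 \<in> C_layers n" using assms(10,12) by (rule C_layers_mult)
  moreover have "C3 * C2 * C1 \<in> C_layers n" by (intro C_layers_mult assms(3,5,7))
  ultimately show ?thesis using assms(2,8) ZP2(1,2) PZ1(1,2) by blast
qed

end
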